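(* Consider $n$ agents in the plane evolving according to the piecewise continuous-time dynamics described in the context, with blind-zone radius $\delta>0$. Let $i\neq j$ be two agents and let $t$ be a time with $d_{ij}(t)=\|p_i(t)-p_j(t)\|>\delta$ (the agents are "separated"). Then the distance between them does not increase at $t$: $\frac{d}{dt}d_{ij}(t)\le 0$.
   Context: Agents $1,\dots,n$ have positions $p_i(t)\in\mathbb{R}^2$. Fix $\delta>0$. For each integer $k\ge 0$ and each agent $i$, let $\chi^{(i)}_k$ be independent random variables, uniformly distributed on $[0,2\pi)$, and set the heading $\theta_i(t)=\chi^{(i)}_k$ for $t\in[k,k+1)$, with unit heading vector $\hat\theta_i(t)=(\cos\theta_i(t),\sin\theta_i(t))^\top$. The motion law is $\dot p_i(t)=\hat\theta_i(t)\,s_i(t)$, where $s_i(t)=0$ if there exists an agent $j$ with $d_{ij}(t)>\delta$ and $\hat\theta_i(t)^\top\big(p_j(t)-p_i(t)\big)\le 0$, and $s_i(t)=1$ otherwise. Here $d_{ij}(t)=\|p_i(t)-p_j(t)\|$. (That is, each agent moves forward with unit speed when its closed back half-plane, excluding a blind-zone half-disc of radius $\delta$, contains no other agent, and otherwise stays put.) The initial configuration $p_1(0),\dots,p_n(0)$ is arbitrary. *)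

theory Defs
  imports "HOL-Analysis.Analysis"
begin

definition heading :: "real \<Rightarrow> real^2" where
  "heading \<theta> = vector [cos \<theta>, sin \<theta>]"

text \<open>Heading of agent i at time t: theta_i(t) = chi^(i)_k for t in [k,k+1).\<close>
definition theta :: "(nat \<Rightarrow> nat \<Rightarrow> real) \<Rightarrow> nat \<Rightarrow> real \<Rightarrow> real" where
  "theta X i t = X i (nat \<lfloor>t\<rfloor>)"

definition speed :: "nat \<Rightarrow> real \<Rightarrow> (nat \<Rightarrow> real^2) \<Rightarrow> real \<Rightarrow> nat \<Rightarrow> real" where
  "speed n \<delta> P th i =
     (if \<exists>j<n. dist (P i) (P j) > \<delta> \<and> heading th \<bullet> (P j - P i) \<le> 0 then 0 else 1)"

end

theory Submission
  imports Defs
begin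

text \<open>Along the line through two separated agents, each agent's velocity is either zero or
  points strictly toward the other: otherwise the other agent would lie in its back half-plane
  outside the blind zone and the agent would have stopped. Hence the relative velocity has a
  nonpositive component along the separation vector, and so the distance cannot grow.\<close>

lemma has_real_derivative_dist:
  fixes f g :: "real \<Rightarrow> 'a::real_inner"
  assumes f: "(f has_vector_derivative f') (at x within S)"
    and g: "(g has_vector_derivative g') (at x within S)"
    and "f x \<noteq> g x"
  shows "((\<lambda>t. dist (f t) (g t)) has_real_derivative (f' - g') \<bullet> sgn (f x - g x))
           (at x within S)"
proof -
  have "((\<lambda>t. f t - g t) has_derivative (\<lambda>h. h *\<^sub>R (f' - g'))) (at x within S)"
    using has_vector_derivative_diff[OF f g] by (simp add: has_vector_derivative_def)
  moreover have "(norm has_derivative (\<lambda>v. v \<bullet> sgn (f x - g x))) (at (f x - g x))"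
    using has_derivative_norm[of "f x - g x"] \<open>f x \<noteq> g x\<close> by simp
  ultimately have "((\<lambda>t. norm (f t - g t)) has_derivative
      (\<lambda>h. (h *\<^sub>R (f' - g')) \<bullet> sgn (f x - g x))) (at x within S)"
    using has_derivative_compose[where f = "\<lambda>t. f t - g t" and g = norm] by blast
  then show ?thesis
    by (simp add: has_field_derivative_def dist_norm inner_scaleR_left mult_commute_abs)
qed

lemma speed_heading_inner_nonneg:
  assumes "j < n" and "dist (P i) (P j) > \<delta>"
  shows "(speed n \<delta> P th i *\<^sub>R heading th) \<bullet> (P j - P i) \<ge> 0"
  using assms by (auto simp: speed_def)

theorem lemma1:
  fixes n :: nat and \<delta> :: real and X :: "nat \<Rightarrow> nat \<Rightarrow> real"
    and p :: "nat \<Rightarrow> real \<Rightarrow> real^2" and i j :: nat and t :: real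
  assumes delta_pos: "\<delta> > 0"
    and chi_range: "\<And>m k. X m k \<in> {0..<2*pi}"
    and motion: "\<And>m \<tau>. m < n \<Longrightarrow> \<tau> \<ge> 0 \<Longrightarrow>
       (p m has_vector_derivative
          (speed n \<delta> (\<lambda>l. p l \<tau>) (theta X m \<tau>) m *\<^sub>R heading (theta X m \<tau>)))
       (at \<tau> within {\<tau>..})"
    and ij: "i < n" "j < n" "i \<noteq> j"
    and t_nonneg: "t \<ge> 0"
    and separated: "dist (p i t) (p j t) > \<delta>"
  shows "\<exists>D. ((\<lambda>\<tau>. dist (p i \<tau>) (p j \<tau>)) has_real_derivative D) (at t within {t..}) \<and> D \<le> 0"
proof -
  define P where "P = (\<lambda>l. p l t)"
  define v where "v m = speed n \<delta> P (theta X m t) m *\<^sub>R heading (theta X m t)" for m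
  have "p i t \<noteq> p j t"
    using separated delta_pos by auto
  then have deriv: "((\<lambda>\<tau>. dist (p i \<tau>) (p j \<tau>)) has_real_derivative
      (v i - v j) \<bullet> sgn (p i t - p j t)) (at t within {t..})"
    using has_real_derivative_dist motion[OF ij(1) t_nonneg] motion[OF ij(2) t_nonneg]
    unfolding v_def P_def by blast
  have "v i \<bullet> (p j t - p i t) \<ge> 0" "v j \<bullet> (p i t - p j t) \<ge> 0"
    using speed_heading_inner_nonneg[where P = P] ij separated
    unfolding v_def P_def by (simp_all add: dist_commute)
  then have "(v i - v j) \<bullet> (p i t - p j t) \<le> 0"
    by (simp add: inner_diff_left inner_diff_right)
  then have "(v i - v j) \<bullet> sgn (p i t - p j t) \<le> 0"
    by (simp add: sgn_div_norm inner_scaleR_right mult_nonneg_nonpos)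
  with deriv show ?thesis by blast
qed

end
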